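(* Let $M=(E,\mathcal{I})$ be a matroid with $\sigma(M)=\lambda(M)=k$. Then any two distinct cocircuits of $M$ of size $k$ are disjoint. In particular, if $G$ is a connected graph (multiple edges allowed) with $\lambda(G)=\sigma(G)=k$, then any two distinct minimal edge cuts of $G$ having exactly $k$ edges have no edge in common.
   Context: For a matroid $M$, $\sigma(M)$ is the maximum number of pairwise disjoint bases and $\lambda(M)$ (the cogirth) is the minimum size of a cocircuit (a minimal set meeting every base). For a connected graph $G$, $\lambda(G)$ is the edge connectivity (the least number of edges whose removal disconnects $G$) and $\sigma(G)$ is the maximum number of pairwise edge-disjoint spanning trees of $G$; these are the cogirth and base packing number of the cycle matroid of $G$, whose cocircuits are the minimal edge cuts. *)

theory Defs
  imports Main "HOL-Library.Extended_Nat"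
begin

definition matroid :: "'a set \<Rightarrow> 'a set set \<Rightarrow> bool" where
  "matroid E \<I> \<longleftrightarrow> finite E \<and> (\<forall>X\<in>\<I>. X \<subseteq> E) \<and> {} \<in> \<I>
     \<and> (\<forall>X Y. Y \<in> \<I> \<longrightarrow> X \<subseteq> Y \<longrightarrow> X \<in> \<I>)
     \<and> (\<forall>X Y. X \<in> \<I> \<longrightarrow> Y \<in> \<I> \<longrightarrow> card X < card Y \<longrightarrow> (\<exists>y\<in>Y - X. insert y X \<in> \<I>))"

definition is_base :: "'a set \<Rightarrow> 'a set set \<Rightarrow> 'a set \<Rightarrow> bool" where
  "is_base E \<I> B \<longleftrightarrow> B \<in> \<I> \<and> (\<forall>X\<in>\<I>. B \<subseteq> X \<longrightarrow> X = B)"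

definition meets_all_bases :: "'a set \<Rightarrow> 'a set set \<Rightarrow> 'a set \<Rightarrow> bool" where
  "meets_all_bases E \<I> C \<longleftrightarrow> C \<subseteq> E \<and> (\<forall>B. is_base E \<I> B \<longrightarrow> C \<inter> B \<noteq> {})"

definition is_cocircuit :: "'a set \<Rightarrow> 'a set set \<Rightarrow> 'a set \<Rightarrow> bool" where
  "is_cocircuit E \<I> C \<longleftrightarrow> meets_all_bases E \<I> C
     \<and> (\<forall>D. D \<subset> C \<longrightarrow> \<not> meets_all_bases E \<I> D)"

text \<open>sigma(M): maximum number of pairwise disjoint bases (infinity if unbounded,
  which only happens for rank 0); lambda(M): cogirth, minimum size of a cocircuit
  (infinity if there is no cocircuit).\<close>
definition base_packing :: "'a set \<Rightarrow> 'a set set \<Rightarrow> enat" where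
  "base_packing E \<I> = Sup {enat n | n. \<exists>B :: nat \<Rightarrow> 'a set.
      (\<forall>i<n. is_base E \<I> (B i)) \<and> (\<forall>i<n. \<forall>j<n. i \<noteq> j \<longrightarrow> B i \<inter> B j = {})}"

definition cogirth :: "'a set \<Rightarrow> 'a set set \<Rightarrow> enat" where
  "cogirth E \<I> = Inf {enat (card C) | C. is_cocircuit E \<I> C}"

text \<open>A multigraph is given by a vertex set V, an edge set Ed and an incidence
  map ends assigning to each edge its set of one (loop) or two end vertices.\<close>
definition multigraph :: "'v set \<Rightarrow> 'e set \<Rightarrow> ('e \<Rightarrow> 'v set) \<Rightarrow> bool" where
  "multigraph V Ed ends \<longleftrightarrow> finite V \<and> finite Ed
     \<and> (\<forall>e\<in>Ed. ends e \<subseteq> V \<and> 1 \<le> card (ends e) \<and> card (ends e) \<le> 2)"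

inductive reach :: "('e \<Rightarrow> 'v set) \<Rightarrow> 'e set \<Rightarrow> 'v \<Rightarrow> 'v \<Rightarrow> bool"
  for ends :: "'e \<Rightarrow> 'v set" and F :: "'e set" where
  refl: "reach ends F u u"
| step: "reach ends F u v \<Longrightarrow> e \<in> F \<Longrightarrow> v \<in> ends e \<Longrightarrow> w \<in> ends e \<Longrightarrow> reach ends F u w"

definition connected_by :: "'v set \<Rightarrow> ('e \<Rightarrow> 'v set) \<Rightarrow> 'e set \<Rightarrow> bool" where
  "connected_by V ends F \<longleftrightarrow> (\<forall>u\<in>V. \<forall>v\<in>V. reach ends F u v)"

definition connected_graph :: "'v set \<Rightarrow> 'e set \<Rightarrow> ('e \<Rightarrow> 'v set) \<Rightarrow> bool" where
  "connected_graph V Ed ends \<longleftrightarrow> multigraph V Ed ends \<and> V \<noteq> {} \<and> connected_by V ends Ed"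

text \<open>An edge set F is acyclic iff no edge of F lies on a cycle of F, i.e. for no
  edge e in F are its ends joined in F - {e} (loops are cycles).\<close>
definition acyclic_edges :: "('e \<Rightarrow> 'v set) \<Rightarrow> 'e set \<Rightarrow> bool" where
  "acyclic_edges ends F \<longleftrightarrow> (\<forall>e\<in>F. \<not> (\<forall>u\<in>ends e. \<forall>v\<in>ends e. reach ends (F - {e}) u v))"

definition spanning_tree :: "'v set \<Rightarrow> 'e set \<Rightarrow> ('e \<Rightarrow> 'v set) \<Rightarrow> 'e set \<Rightarrow> bool" where
  "spanning_tree V Ed ends T \<longleftrightarrow> T \<subseteq> Ed \<and> connected_by V ends T \<and> acyclic_edges ends T"

definition edge_cut :: "'v set \<Rightarrow> 'e set \<Rightarrow> ('e \<Rightarrow> 'v set) \<Rightarrow> 'e set \<Rightarrow> bool" where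
  "edge_cut V Ed ends C \<longleftrightarrow> C \<subseteq> Ed \<and> \<not> connected_by V ends (Ed - C)"

definition minimal_edge_cut :: "'v set \<Rightarrow> 'e set \<Rightarrow> ('e \<Rightarrow> 'v set) \<Rightarrow> 'e set \<Rightarrow> bool" where
  "minimal_edge_cut V Ed ends C \<longleftrightarrow> edge_cut V Ed ends C
     \<and> (\<forall>D. D \<subset> C \<longrightarrow> \<not> edge_cut V Ed ends D)"

definition edge_connectivity :: "'v set \<Rightarrow> 'e set \<Rightarrow> ('e \<Rightarrow> 'v set) \<Rightarrow> enat" where
  "edge_connectivity V Ed ends = Inf {enat (card C) | C. edge_cut V Ed ends C}"

definition tree_packing :: "'v set \<Rightarrow> 'e set \<Rightarrow> ('e \<Rightarrow> 'v set) \<Rightarrow> enat" where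
  "tree_packing V Ed ends = Sup {enat n | n. \<exists>T :: nat \<Rightarrow> 'e set.
      (\<forall>i<n. spanning_tree V Ed ends (T i)) \<and> (\<forall>i<n. \<forall>j<n. i \<noteq> j \<longrightarrow> T i \<inter> T j = {})}"

end

theory Submission
  imports Defs
begin

text \<open>
  Suppose \<open>\<sigma> = k\<close> and \<open>C \<noteq> D\<close> are cocircuits with \<open>|C| = |D| = k\<close> sharing an
  element \<open>e\<close>.  Take \<open>k\<close> pairwise disjoint bases \<open>B\<^sub>0, \<dots>, B\<^sub>k\<^sub>-\<^sub>1\<close> (the supremum
  defining \<open>\<sigma>\<close> is attained).  Each cocircuit meets every base, so a \<open>k\<close>-element cocircuit
  meets each \<open>B\<^sub>i\<close> in exactly one element; hence for the unique \<open>B\<^sub>j\<close> containing \<open>e\<close>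
  we get \<open>C \<inter> B\<^sub>j = D \<inter> B\<^sub>j = {e}\<close>.  But a cocircuit meeting a base \<open>B\<close> in exactly
  \<open>{e}\<close> is unique (the fundamental cocircuit of \<open>e\<close> w.r.t. \<open>B\<close>), so \<open>C = D\<close>.

  The two halves of the main theorem then follow the same outline.
\<close>

section \<open>Packings: attainment and the pigeonhole step\<close>

text \<open>A supremum of extended naturals that is finite is attained.  This turns the
  hypothesis \<open>\<sigma> = k\<close> into an actual packing of \<open>k\<close> disjoint objects.\<close>
lemma enat_Sup_mem:
  fixes S :: "enat set"
  assumes "Sup S = enat k" and "S \<noteq> {}"
  shows "enat k \<in> S"
proof -
  have "finite S"
  proof (rule ccontr)
    assume "infinite S"
    then have "Sup S = \<infinity>" using assms(2) by (simp add: Sup_enat_def)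
    then show False using assms(1) by simp
  qed
  then have "Sup S = Max S" using assms(2) by (simp add: Sup_enat_def)
  then show ?thesis using Max_in[OF \<open>finite S\<close> assms(2)] assms(1) by simp
qed

definition disjoint_packing :: "('x set \<Rightarrow> bool) \<Rightarrow> nat \<Rightarrow> (nat \<Rightarrow> 'x set) \<Rightarrow> bool" where
  "disjoint_packing P n B \<longleftrightarrow>
     (\<forall>i<n. P (B i)) \<and> (\<forall>i<n. \<forall>j<n. i \<noteq> j \<longrightarrow> B i \<inter> B j = {})"

lemma packing_attained:
  assumes "Sup {enat n | n. \<exists>B. disjoint_packing P n B} = enat k"
  shows "\<exists>B. disjoint_packing P k B"
proof -
  have "enat 0 \<in> {enat n | n. \<exists>B. disjoint_packing P n B}"
    by (auto simp: disjoint_packing_def)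
  then have "enat k \<in> {enat n | n. \<exists>B. disjoint_packing P n B}"
    using enat_Sup_mem[OF assms] by blast
  then show ?thesis by auto
qed

text \<open>Pigeonhole: a \<open>k\<close>-element set meeting each of \<open>k\<close> pairwise disjoint blocks meets
  every block exactly once, so each of its elements is alone in some block.\<close>
lemma transversal_meets_block_once:
  fixes B :: "nat \<Rightarrow> 'x set"
  assumes fin: "finite C" and ck: "card C = k"
    and meet: "\<forall>i<k. C \<inter> B i \<noteq> {}"
    and disj: "\<forall>i<k. \<forall>j<k. i \<noteq> j \<longrightarrow> B i \<inter> B j = {}"
    and eC: "e \<in> C"
  shows "\<exists>j<k. C \<inter> B j = {e}"
proof -
  define c where "c i = (SOME x. x \<in> C \<inter> B i)" for i
  have c: "c i \<in> C \<inter> B i" if "i < k" for i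
    using meet that unfolding c_def by (metis ex_in_conv someI)
  have same_block: "i = j" if "i < k" "j < k" "x \<in> B i" "x \<in> B j" for i j x
    using disj that by blast
  have "inj_on c {..<k}"
    by (rule inj_onI) (use c same_block in fastforce)
  then have "card (c ` {..<k}) = card C" using ck by (simp add: card_image)
  moreover have "c ` {..<k} \<subseteq> C" using c by auto
  ultimately have onto: "c ` {..<k} = C" using card_subset_eq[OF fin] by blast
  then obtain j where j: "j < k" "e = c j" using eC by auto
  have "C \<inter> B j \<subseteq> {e}"
  proof
    fix x assume x: "x \<in> C \<inter> B j"
    then obtain i where "i < k" "x = c i" using onto by auto
    then show "x \<in> {e}" using c[of i] same_block[of i j x] x j by auto
  qed
  then show ?thesis using c[OF j(1)] j by blast
qed

lemma shared_element_common_block: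
  fixes B :: "nat \<Rightarrow> 'x set"
  assumes disj: "\<forall>i<k. \<forall>j<k. i \<noteq> j \<longrightarrow> B i \<inter> B j = {}"
    and "finite C" "card C = k" "\<forall>i<k. C \<inter> B i \<noteq> {}"
    and "finite D" "card D = k" "\<forall>i<k. D \<inter> B i \<noteq> {}"
    and "e \<in> C" "e \<in> D"
  shows "\<exists>j<k. C \<inter> B j = {e} \<and> D \<inter> B j = {e}"
proof -
  obtain j where j: "j < k" "C \<inter> B j = {e}"
    using transversal_meets_block_once[of C k B e] assms by blast
  obtain j' where j': "j' < k" "D \<inter> B j' = {e}"
    using transversal_meets_block_once[of D k B e] assms by blast
  have "j' = j" using disj j j' by blast
  then show ?thesis using j j' by blast
qed

section \<open>Matroids: uniqueness of fundamental cocircuits\<close>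

lemma matroid_finite: "matroid E I \<Longrightarrow> finite E"
  by (simp add: matroid_def)

lemma matroid_indep_finite: "matroid E I \<Longrightarrow> X \<in> I \<Longrightarrow> finite X"
  unfolding matroid_def by (meson finite_subset)

lemma matroid_indep_subset: "matroid E I \<Longrightarrow> Y \<in> I \<Longrightarrow> X \<subseteq> Y \<Longrightarrow> X \<in> I"
  unfolding matroid_def by blast

lemma matroid_augment:
  "matroid E I \<Longrightarrow> X \<in> I \<Longrightarrow> Y \<in> I \<Longrightarrow> card X < card Y \<Longrightarrow> \<exists>y\<in>Y - X. insert y X \<in> I"
  unfolding matroid_def by blast

text \<open>A base cannot be augmented, so no independent set is larger than a base.\<close>
lemma base_not_smaller:
  assumes "matroid E I" "is_base E I B" "X \<in> I"
  shows "\<not> card B < card X"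
proof
  assume "card B < card X"
  then obtain y where "y \<in> X - B" "insert y B \<in> I"
    using matroid_augment[of E I B X] assms by (auto simp: is_base_def)
  then show False using assms(2) by (auto simp: is_base_def)
qed

lemma base_card_eq:
  "matroid E I \<Longrightarrow> is_base E I B1 \<Longrightarrow> is_base E I B2 \<Longrightarrow> card B1 = card B2"
  using base_not_smaller[of E I] by (meson is_base_def not_less_iff_gr_or_eq)

lemma indep_card_base:
  assumes m: "matroid E I" and B: "is_base E I B" and X: "X \<in> I" and c: "card X = card B"
  shows "is_base E I X"
  unfolding is_base_def
proof (intro conjI ballI impI)
  show "X \<in> I" by fact
  fix Y assume Y: "Y \<in> I" "X \<subseteq> Y"
  have "\<not> card X < card Y" using base_not_smaller[OF m B Y(1)] c by simp
  then show "Y = X"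
    using card_seteq[OF matroid_indep_finite[OF m Y(1)] Y(2)] by simp
qed

lemma base_exchange:
  assumes m: "matroid E I" and B: "is_base E I B" and e: "e \<in> B" and x: "x \<notin> B - {e}"
    and indep: "insert x (B - {e}) \<in> I"
  shows "is_base E I (insert x (B - {e}))"
proof -
  have "finite B" using B matroid_indep_finite[OF m] by (simp add: is_base_def)
  then have "card (insert x (B - {e})) = card B"
    using e x by (metis card_Suc_Diff1 card_insert_disjoint finite_Diff)
  then show ?thesis using indep_card_base[OF m B indep] by simp
qed

lemma cocircuit_meets_base: "is_cocircuit E I C \<Longrightarrow> is_base E I B \<Longrightarrow> C \<inter> B \<noteq> {}"
  by (simp add: is_cocircuit_def meets_all_bases_def)

text \<open>For \<open>f \<in> C - D\<close>, the set \<open>B - e + f\<close> would be a base missing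
  \<open>D\<close>, so it is dependent; but minimality of \<open>C\<close> gives a base \<open>B'\<close> missing \<open>C - f\<close>, and
  augmenting \<open>B - e\<close> from \<open>B'\<close> can only add \<open>f\<close>.\<close>
lemma fundamental_cocircuit_subset:
  assumes m: "matroid E I" and B: "is_base E I B"
    and C: "is_cocircuit E I C" and D: "is_cocircuit E I D"
    and CB: "C \<inter> B = {e}" and DB: "D \<inter> B = {e}"
  shows "C \<subseteq> D"
proof
  fix f assume fC: "f \<in> C"
  show "f \<in> D"
  proof (rule ccontr)
    assume fD: "f \<notin> D"
    define I0 where "I0 = B - {e}"
    have eB: "e \<in> B" using CB by blast
    have BI: "B \<in> I" using B by (simp add: is_base_def)
    have I0: "I0 \<in> I" using matroid_indep_subset[OF m BI] by (simp add: I0_def)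
    have fB: "f \<notin> I0" using CB fC by (auto simp: I0_def)
    have f_dependent: "insert f I0 \<notin> I"
    proof
      assume "insert f I0 \<in> I"
      then have "is_base E I (insert f I0)" using base_exchange[OF m B eB] fB by (simp add: I0_def)
      moreover have "D \<inter> insert f I0 = {}" using DB fD by (auto simp: I0_def)
      ultimately show False using cocircuit_meets_base[OF D] by blast
    qed
    have "C - {f} \<subset> C" using fC by blast
    then have "\<not> meets_all_bases E I (C - {f})" using C by (simp add: is_cocircuit_def)
    then obtain B' where B': "is_base E I B'" and B'C: "(C - {f}) \<inter> B' = {}"
      using C by (auto simp: is_cocircuit_def meets_all_bases_def)
    have "card I0 < card B'"
      using base_card_eq[OF m B B'] card_Diff1_less[OF matroid_indep_finite[OF m BI] eB]
      by (simp add: I0_def)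
    then obtain y where y: "y \<in> B' - I0" "insert y I0 \<in> I"
      using matroid_augment[OF m I0] B' by (auto simp: is_base_def)
    then have "is_base E I (insert y I0)" using base_exchange[OF m B eB] by (simp add: I0_def)
    then have "y \<in> C" using cocircuit_meets_base[OF C] CB by (auto simp: I0_def)
    then have "y = f" using y B'C by blast
    then show False using y f_dependent by simp
  qed
qed

lemma fundamental_cocircuit_unique:
  assumes "matroid E I" "is_base E I B" "is_cocircuit E I C" "is_cocircuit E I D"
    "C \<inter> B = {e}" "D \<inter> B = {e}"
  shows "C = D"
  using fundamental_cocircuit_subset[of E I B C D e] fundamental_cocircuit_subset[of E I B D C e] assms
  by blast

theorem equal_size_cocircuits_disjoint:
  assumes m: "matroid E I" and bp: "base_packing E I = enat k"
    and C: "is_cocircuit E I C" and D: "is_cocircuit E I D" and ne: "C \<noteq> D"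
    and kC: "card C = k" and kD: "card D = k"
  shows "C \<inter> D = {}"
proof (rule ccontr)
  assume "C \<inter> D \<noteq> {}"
  then obtain e where e: "e \<in> C" "e \<in> D" by blast
  have "Sup {enat n | n. \<exists>B. disjoint_packing (is_base E I) n B} = enat k"
    using bp by (simp add: base_packing_def disjoint_packing_def)
  then obtain B where "disjoint_packing (is_base E I) k B" using packing_attained by blast
  then have bases: "\<forall>i<k. is_base E I (B i)" and disj: "\<forall>i<k. \<forall>j<k. i \<noteq> j \<longrightarrow> B i \<inter> B j = {}"
    by (simp_all add: disjoint_packing_def)
  have fin: "finite C" "finite D"
    using C D matroid_finite[OF m] finite_subset
    by (auto simp: is_cocircuit_def meets_all_bases_def)
  have "\<forall>i<k. C \<inter> B i \<noteq> {}" "\<forall>i<k. D \<inter> B i \<noteq> {}"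
    using bases cocircuit_meets_base[OF C] cocircuit_meets_base[OF D] by auto
  then obtain j where j: "j < k" "C \<inter> B j = {e}" "D \<inter> B j = {e}"
    using shared_element_common_block[OF disj fin(1) kC _ fin(2) kD _ e] by blast
  then have "C = D" using fundamental_cocircuit_unique[OF m _ C D] bases by blast
  then show False using ne by contradiction
qed

section \<open>Graphs: minimal edge cuts are fundamental cuts\<close>

lemma reach_trans [trans]:
  assumes "reach ends F a b" and "reach ends F b c"
  shows "reach ends F a c"
  using assms(2,1) by (induction rule: reach.induct) (auto intro: reach.step)

lemma reach_edge: "e \<in> F \<Longrightarrow> v \<in> ends e \<Longrightarrow> w \<in> ends e \<Longrightarrow> reach ends F v w"
  by (meson reach.refl reach.step)

lemma reach_sym: "reach ends F a b \<Longrightarrow> reach ends F b a"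
proof (induction rule: reach.induct)
  case (refl u) then show ?case by (rule reach.refl)
next
  case (step u v e w)
  then show ?case using reach_edge reach_trans by metis
qed

lemma reach_mono: "reach ends F a b \<Longrightarrow> F \<subseteq> G \<Longrightarrow> reach ends G a b"
  by (induction rule: reach.induct) (auto intro: reach.intros)

lemma reach_insert_redundant:
  assumes "\<forall>x\<in>ends g. \<forall>y\<in>ends g. reach ends F x y"
  shows "reach ends (insert g F) a b \<Longrightarrow> reach ends F a b"
proof (induction rule: reach.induct)
  case (refl u) then show ?case by (rule reach.refl)
next
  case (step u v e w)
  show ?case
  proof (cases "e = g")
    case True
    then show ?thesis using assms step reach_trans by metis
  next
    case False
    then show ?thesis using step reach.step by fastforce
  qed
qed

lemma reach_delete_edge:
  "reach ends T a w \<Longrightarrow> a \<in> ends e \<Longrightarrow> \<exists>z\<in>ends e. reach ends (T - {e}) z w"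
proof (induction rule: reach.induct)
  case (refl u) then show ?case using reach.refl[of ends "T - {e}" u] by blast
next
  case (step u v g w)
  then obtain z where z: "z \<in> ends e" "reach ends (T - {e}) z v" by blast
  show ?case
  proof (cases "g = e")
    case True
    then show ?thesis using step reach.refl[of ends "T - {e}" w] by blast
  next
    case False
    then show ?thesis using z step reach.step[of ends "T - {e}" z v g w] by blast
  qed
qed

lemma reach_from_edge_ends:
  assumes "connected_by V ends T" "u \<in> ends e" "u \<in> V" "w \<in> V"
  shows "\<exists>z\<in>ends e. reach ends (T - {e}) z w"
proof -
  have "reach ends T u w" using assms by (simp add: connected_by_def)
  from reach_delete_edge[OF this assms(2)] show ?thesis .
qed

text \<open>An edge has at most two ends, so two distinct ends are all of them.\<close>
lemma at_most_two_elements: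
  assumes "finite S" "card S \<le> 2" "z1 \<in> S" "z2 \<in> S" "z1 \<noteq> z2" "x \<in> S"
  shows "x = z1 \<or> x = z2"
proof (rule ccontr)
  assume "\<not> (x = z1 \<or> x = z2)"
  then have "card {z1, z2, x} = 3" using assms(5) by auto
  moreover have "card {z1, z2, x} \<le> card S" using assms by (intro card_mono) auto
  ultimately show False using assms(2) by simp
qed

lemma connected_by_rejoin:
  assumes T: "connected_by V ends T" and sub: "T - {e} \<subseteq> S"
    and u: "u \<in> ends e" "u \<in> V"
    and joined: "\<forall>z1\<in>ends e. \<forall>z2\<in>ends e. reach ends S z1 z2"
  shows "connected_by V ends S"
  unfolding connected_by_def
proof (intro ballI)
  fix a b assume "a \<in> V" "b \<in> V"
  then obtain z1 z2 where z: "z1 \<in> ends e" "reach ends (T - {e}) z1 a"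
      "z2 \<in> ends e" "reach ends (T - {e}) z2 b"
    using reach_from_edge_ends[OF T u] by blast
  have "reach ends S a z1" using reach_sym[OF reach_mono[OF z(2) sub]] .
  also have "reach ends S z1 z2" using joined z by blast
  also have "reach ends S z2 b" using reach_mono[OF z(4) sub] .
  finally show "reach ends S a b" .
qed

definition fundamental_cut :: "('e \<Rightarrow> 'v set) \<Rightarrow> 'e set \<Rightarrow> 'e set \<Rightarrow> 'e set" where
  "fundamental_cut ends Ed F = {g \<in> Ed. \<exists>x\<in>ends g. \<exists>y\<in>ends g. \<not> reach ends F x y}"

lemma minimal_cut_edge_separated:
  assumes C: "minimal_edge_cut V Ed ends C" and g: "g \<in> C"
  shows "\<exists>x\<in>ends g. \<exists>y\<in>ends g. \<not> reach ends (Ed - C) x y"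
proof (rule ccontr)
  assume "\<not> ?thesis"
  then have joined: "\<forall>x\<in>ends g. \<forall>y\<in>ends g. reach ends (Ed - C) x y" by blast
  have "C - {g} \<subset> C" "C - {g} \<subseteq> Ed" using g C by (auto simp: minimal_edge_cut_def edge_cut_def)
  then have "connected_by V ends (Ed - (C - {g}))"
    using C by (simp add: minimal_edge_cut_def edge_cut_def)
  moreover have "Ed - (C - {g}) = insert g (Ed - C)"
    using g C by (auto simp: minimal_edge_cut_def edge_cut_def)
  ultimately have "connected_by V ends (Ed - C)"
    using reach_insert_redundant[OF joined] by (simp add: connected_by_def)
  then show False using C by (simp add: minimal_edge_cut_def edge_cut_def)
qed

text \<open>Let \<open>T\<close> be a connected spanning subgraph with an edge \<open>e\<close>, and \<open>S \<supseteq> T - e\<close> a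
  disconnected spanning subgraph.  Then every edge of \<open>S\<close> has its ends joined in \<open>T - e\<close>:
  otherwise its ends are reached in \<open>T - e\<close> from the two distinct ends of \<open>e\<close>, so the ends
  of \<open>e\<close> are joined in \<open>S\<close> and \<open>S\<close> would be connected.\<close>
lemma edge_of_disconnected_supergraph_joined:
  assumes mg: "multigraph V Ed ends" and TE: "T \<subseteq> Ed" and Tc: "connected_by V ends T"
    and eT: "e \<in> T" and TS: "T - {e} \<subseteq> S" and S_disconnected: "\<not> connected_by V ends S"
    and gS: "g \<in> S" and gE: "g \<in> Ed" and xy: "x \<in> ends g" "y \<in> ends g"
  shows "reach ends (T - {e}) x y"
proof (rule ccontr)
  assume sep: "\<not> reach ends (T - {e}) x y"
  have e_ends: "ends e \<subseteq> V" "1 \<le> card (ends e)" "card (ends e) \<le> 2"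
    using mg eT TE by (auto simp: multigraph_def)
  have e_fin: "finite (ends e)"
    using finite_subset[OF e_ends(1)] mg by (simp add: multigraph_def)
  have "ends e \<noteq> {}" using e_ends(2) by auto
  then obtain u where u: "u \<in> ends e" "u \<in> V" using e_ends by blast
  have "x \<in> V" "y \<in> V" using mg gE xy by (auto simp: multigraph_def)
  then obtain z1 z2 where z: "z1 \<in> ends e" "reach ends (T - {e}) z1 x"
      "z2 \<in> ends e" "reach ends (T - {e}) z2 y"
    using reach_from_edge_ends[OF Tc u] by blast
  have "z1 \<noteq> z2"
  proof
    assume "z1 = z2"
    then have "reach ends (T - {e}) x z2" using reach_sym[OF z(2)] by simp
    then show False using reach_trans[OF _ z(4)] sep by blast
  qed
  have "reach ends S z1 x" using reach_mono[OF z(2) TS] .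
  also have "reach ends S x y" using reach_edge[where ends = ends, OF gS xy] .
  also have "reach ends S y z2" using reach_sym[OF reach_mono[OF z(4) TS]] .
  finally have z12: "reach ends S z1 z2" .
  have "\<forall>a\<in>ends e. \<forall>b\<in>ends e. reach ends S a b"
  proof (intro ballI)
    fix a b assume "a \<in> ends e" "b \<in> ends e"
    then have "a \<in> {z1, z2}" "b \<in> {z1, z2}"
      using at_most_two_elements[OF e_fin e_ends(3) z(1,3) \<open>z1 \<noteq> z2\<close>] by auto
    then show "reach ends S a b" using z12 reach_sym[OF z12] reach.refl by auto
  qed
  then show False using connected_by_rejoin[OF Tc TS u] S_disconnected by blast
qed

text \<open>A minimal edge cut \<open>C\<close> meeting a connected spanning subgraph \<open>T\<close> only in \<open>e\<close> is the
  fundamental cut of \<open>T - e\<close>: edges of \<open>C\<close> are separated already in \<open>G - C \<supseteq> T - e\<close>, and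
  edges of the disconnected graph \<open>G - C\<close> are joined in \<open>T - e\<close>.\<close>
lemma minimal_cut_is_fundamental_cut:
  assumes G: "connected_graph V Ed ends" and TE: "T \<subseteq> Ed" and Tc: "connected_by V ends T"
    and eT: "e \<in> T" and TC: "T \<inter> C \<subseteq> {e}" and C: "minimal_edge_cut V Ed ends C"
  shows "C = fundamental_cut ends Ed (T - {e})"
proof (rule equalityI)
  define S where "S = Ed - C"
  have TS: "T - {e} \<subseteq> S" using TE TC by (auto simp: S_def)
  have CE: "C \<subseteq> Ed" and S_disconnected: "\<not> connected_by V ends S"
    using C by (auto simp: minimal_edge_cut_def edge_cut_def S_def)
  show "C \<subseteq> fundamental_cut ends Ed (T - {e})"
  proof
    fix g assume g: "g \<in> C"
    obtain x y where xy: "x \<in> ends g" "y \<in> ends g" "\<not> reach ends S x y"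
      using minimal_cut_edge_separated[OF C g] unfolding S_def by blast
    then have "\<not> reach ends (T - {e}) x y" using reach_mono[of ends "T - {e}" x y S] TS by blast
    then show "g \<in> fundamental_cut ends Ed (T - {e})"
      using g CE xy by (auto simp: fundamental_cut_def)
  qed
  have mg: "multigraph V Ed ends" using G by (simp add: connected_graph_def)
  show "fundamental_cut ends Ed (T - {e}) \<subseteq> C"
  proof
    fix g assume "g \<in> fundamental_cut ends Ed (T - {e})"
    then obtain x y where gE: "g \<in> Ed" and xy: "x \<in> ends g" "y \<in> ends g"
      and sep: "\<not> reach ends (T - {e}) x y" by (auto simp: fundamental_cut_def)
    show "g \<in> C"
    proof (rule ccontr)
      assume "g \<notin> C"
      then have "g \<in> S" using gE by (simp add: S_def)
      then show False
        using edge_of_disconnected_supergraph_joined[OF mg TE Tc eT TS S_disconnected _ gE xy] sep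
        by blast
    qed
  qed
qed

lemma edge_cut_meets_spanning_tree:
  assumes "edge_cut V Ed ends C" "spanning_tree V Ed ends T"
  shows "C \<inter> T \<noteq> {}"
proof
  assume "C \<inter> T = {}"
  then have "T \<subseteq> Ed - C" using assms(2) by (auto simp: spanning_tree_def)
  moreover have "connected_by V ends T" using assms(2) by (simp add: spanning_tree_def)
  ultimately have "connected_by V ends (Ed - C)"
    unfolding connected_by_def using reach_mono[where ends = ends] by blast
  then show False using assms(1) by (simp add: edge_cut_def)
qed

theorem equal_size_minimal_cuts_disjoint:
  assumes G: "connected_graph V Ed ends" and tp: "tree_packing V Ed ends = enat k"
    and C: "minimal_edge_cut V Ed ends C" and D: "minimal_edge_cut V Ed ends D" and ne: "C \<noteq> D"
    and kC: "card C = k" and kD: "card D = k"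
  shows "C \<inter> D = {}"
proof (rule ccontr)
  assume "C \<inter> D \<noteq> {}"
  then obtain e where e: "e \<in> C" "e \<in> D" by blast
  have "Sup {enat n | n. \<exists>T. disjoint_packing (spanning_tree V Ed ends) n T} = enat k"
    using tp by (simp add: tree_packing_def disjoint_packing_def)
  then obtain T where "disjoint_packing (spanning_tree V Ed ends) k T" using packing_attained by blast
  then have trees: "\<forall>i<k. spanning_tree V Ed ends (T i)"
    and disj: "\<forall>i<k. \<forall>j<k. i \<noteq> j \<longrightarrow> T i \<inter> T j = {}"
    by (simp_all add: disjoint_packing_def)
  have cuts: "edge_cut V Ed ends C" "edge_cut V Ed ends D"
    using C D by (simp_all add: minimal_edge_cut_def)
  have fin: "finite C" "finite D"
    using cuts G finite_subset by (auto simp: edge_cut_def connected_graph_def multigraph_def)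
  have "\<forall>i<k. C \<inter> T i \<noteq> {}" "\<forall>i<k. D \<inter> T i \<noteq> {}"
    using trees edge_cut_meets_spanning_tree[OF cuts(1)] edge_cut_meets_spanning_tree[OF cuts(2)]
    by auto
  then obtain j where j: "j < k" "C \<inter> T j = {e}" "D \<inter> T j = {e}"
    using shared_element_common_block[OF disj fin(1) kC _ fin(2) kD _ e] by blast
  then have Tj: "T j \<subseteq> Ed" "connected_by V ends (T j)" "e \<in> T j"
    using trees by (auto simp: spanning_tree_def)
  have "C = fundamental_cut ends Ed (T j - {e})"
    using minimal_cut_is_fundamental_cut[OF G Tj _ C] j(2) by blast
  moreover have "D = fundamental_cut ends Ed (T j - {e})"
    using minimal_cut_is_fundamental_cut[OF G Tj _ D] j(3) by blast
  ultimately show False using ne by simp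
qed

theorem mainTheorem2:
  shows "(\<forall>(E :: 'a set) \<I> (k :: nat) C D.
            matroid E \<I> \<longrightarrow> base_packing E \<I> = enat k \<longrightarrow> cogirth E \<I> = enat k \<longrightarrow>
            is_cocircuit E \<I> C \<longrightarrow> is_cocircuit E \<I> D \<longrightarrow> C \<noteq> D \<longrightarrow>
            card C = k \<longrightarrow> card D = k \<longrightarrow> C \<inter> D = {})
       \<and> (\<forall>(V :: 'v set) (Ed :: 'e set) ends (k :: nat) C D.
            connected_graph V Ed ends \<longrightarrow>
            edge_connectivity V Ed ends = enat k \<longrightarrow> tree_packing V Ed ends = enat k \<longrightarrow>
            minimal_edge_cut V Ed ends C \<longrightarrow> minimal_edge_cut V Ed ends D \<longrightarrow> C \<noteq> D \<longrightarrow>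
            card C = k \<longrightarrow> card D = k \<longrightarrow> C \<inter> D = {})"
  by (intro conjI allI impI)
    (rule equal_size_cocircuits_disjoint equal_size_minimal_cuts_disjoint; assumption)+

end
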